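(* Let $K$ be a field of characteristic $\neq2$, $\zeta_4$ a primitive fourth root of unity in a fixed algebraic closure of $K$, and let $x\in K^*$ with $-x\in(K^* )^2$. Choose a fourth root $\sqrt[4]x$ of $x$, giving the Kummer cocycle $x:G_K\to\mathbb Z/4$, $g(\sqrt[4]x)/\sqrt[4]x=\zeta_4^{x(g)}$, and the cochain $\binom x2:G_K\to\mathbb Z/2$, $g\mapsto\binom{x(g)}2\bmod2$. Then there is an equality of cocycles $\binom x2=\{2\sqrt{-x}\}:G_K\to\mathbb Z/2$, where $\sqrt{-x}=\zeta_4(\sqrt[4]x)^2\in K$.
   Context: For $z\in K^*$, $\{z\}:G_K\to\mathbb Z/2$ denotes the mod-$2$ Kummer cocycle $g\mapsto g(\sqrt z)/\sqrt z\in\mu_2=\mathbb Z/2$ (independent of the choice of square root). *)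

theory Defs
  imports "HOL-Computational_Algebra.Polynomial"
begin

text \<open>A subfield K of the ambient field (the ambient type plays the role of a fixed
algebraic closure of K).\<close>
definition is_subfield :: "'a::field set \<Rightarrow> bool" where
  "is_subfield K \<longleftrightarrow> 0 \<in> K \<and> 1 \<in> K \<and>
     (\<forall>a\<in>K. \<forall>b\<in>K. a + b \<in> K \<and> a * b \<in> K) \<and>
     (\<forall>a\<in>K. - a \<in> K \<and> inverse a \<in> K)"

definition is_algebraic_closure_of :: "'a::field set \<Rightarrow> bool" where
  "is_algebraic_closure_of K \<longleftrightarrow>
     (\<forall>p::'a poly. degree p > 0 \<longrightarrow> (\<exists>z. poly p z = 0)) \<and>
     (\<forall>a::'a. \<exists>p. p \<noteq> 0 \<and> (\<forall>i. coeff p i \<in> K) \<and> poly p a = 0)"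

definition abs_galois :: "'a::field set \<Rightarrow> ('a \<Rightarrow> 'a) set" where
  "abs_galois K = {g. bij g \<and> (\<forall>a b. g (a + b) = g a + g b \<and> g (a * b) = g a * g b)
                      \<and> (\<forall>a\<in>K. g a = a)}"

text \<open>Mod-4 Kummer cocycle of a chosen fourth root r: g(r)/r = zeta^(k g), k g in {0..3}
  (representing Z/4).\<close>
definition kummer4 :: "'a::field \<Rightarrow> 'a \<Rightarrow> ('a \<Rightarrow> 'a) \<Rightarrow> nat" where
  "kummer4 zeta r g = (THE k. k < 4 \<and> g r = zeta ^ k * r)"

text \<open>Mod-2 Kummer cocycle {z}: g \<mapsto> g(sqrt z)/sqrt z in mu_2 = Z/2 (as 0/1).\<close>
definition kummer2 :: "'a::field \<Rightarrow> ('a \<Rightarrow> 'a) \<Rightarrow> nat" where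
  "kummer2 z g = (let w = (SOME w. w ^ 2 = z) in if g w = w then 0 else 1)"

end

theory Submission
  imports Defs
begin

text \<open>Let \<open>r\<close> be the chosen fourth root of \<open>x\<close> and \<open>w = r (1 + \<zeta>)\<close>, a square root of
  \<open>2 \<zeta> r\<^sup>2\<close>. If \<open>g r = \<zeta>\<^sup>k r\<close>, then \<open>g\<close> fixes \<open>\<zeta> r\<^sup>2 = \<plusminus>\<surd>(-x) \<in> K\<close>, which forces
  \<open>g \<zeta> = \<zeta>\<^sup>1\<^sup>-\<^sup>2\<^sup>k\<close>. Hence \<open>g w / w = \<zeta>\<^sup>k (1 + \<zeta>\<^sup>1\<^sup>-\<^sup>2\<^sup>k) / (1 + \<zeta>)\<close>, and checking
  \<open>k = 0, 1, 2, 3\<close> gives \<open>1, 1, -1, -1\<close>, that is \<open>(-1)\<^bsup>k choose 2\<^esup>\<close>.\<close>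

lemma primitive_fourth_root_square:
  fixes \<zeta> :: "'a::idom"
  assumes "\<zeta> ^ 4 = 1" and "\<zeta> ^ 2 \<noteq> 1"
  shows "\<zeta> ^ 2 = -1"
proof -
  have "(\<zeta> ^ 2 - 1) * (\<zeta> ^ 2 + 1) = \<zeta> ^ 4 - 1"
    by (simp add: algebra_simps power2_eq_square power4_eq_xxxx)
  with assms show ?thesis
    by (simp add: eq_neg_iff_add_eq_0)
qed

lemma power_less_four_eq_nth:
  fixes \<zeta> :: "'a::ring_1"
  assumes \<zeta>: "\<zeta> ^ 2 = -1" and k: "k < 4"
  shows "\<zeta> ^ k = [1, \<zeta>, -1, -\<zeta>] ! k"
proof -
  have "k = 0 \<or> k = 1 \<or> k = 2 \<or> k = 3"
    using k by auto
  moreover have "\<zeta> ^ 3 = - \<zeta>"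
    using \<zeta> by (simp add: power3_eq_cube power2_eq_square)
  ultimately show ?thesis
    using \<zeta> by (auto simp: numeral_2_eq_2 numeral_3_eq_3)
qed

lemma fourth_root_of_unity_eq_power:
  fixes \<zeta> u :: "'a::idom"
  assumes \<zeta>: "\<zeta> ^ 2 = -1" and u: "u ^ 4 = 1"
  obtains k where "k < 4" and "u = \<zeta> ^ k"
proof -
  have "(u ^ 2 - 1 ^ 2) * (u ^ 2 - \<zeta> ^ 2) = u ^ 4 - 1"
    using \<zeta> by (simp add: algebra_simps power2_eq_square power4_eq_xxxx)
  with u have "u \<in> set [1, \<zeta>, -1, -\<zeta>]"
    by (auto simp: power2_eq_iff power2_eq_1_iff)
  then obtain k where "k < length [1, \<zeta>, -1, -\<zeta>]" and "u = [1, \<zeta>, -1, -\<zeta>] ! k"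
    by (metis in_set_conv_nth)
  then show ?thesis
    by (intro that[of k]) (simp_all add: power_less_four_eq_nth[OF \<zeta>] eval_nat_numeral)
qed

lemma power_less_four_inj:
  fixes \<zeta> :: "'a::idom"
  assumes \<zeta>: "\<zeta> ^ 2 = -1" and two: "(2::'a) \<noteq> 0"
    and "j < 4" and "k < 4" and "\<zeta> ^ j = \<zeta> ^ k"
  shows "j = k"
proof -
  have "(-1::'a) \<noteq> 1"
    using two by (metis one_add_one add_eq_0_iff2)
  with \<zeta> have "\<zeta> \<noteq> 1" "\<zeta> \<noteq> -1"
    by auto
  moreover have "\<zeta> \<noteq> - \<zeta>"
    using \<zeta> two by (auto simp: eq_neg_iff_add_eq_0 simp flip: mult_2)
  ultimately have "distinct [1, \<zeta>, -1, -\<zeta>]"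
    using \<open>-1 \<noteq> 1\<close> by (simp, metis minus_minus)
  then show ?thesis
    using assms(3-5) by (simp add: power_less_four_eq_nth[OF \<zeta>] nth_eq_iff_index_eq)
qed

lemma power_mult_one_plus_conj_eq:
  fixes \<zeta> c :: "'a::comm_ring_1"
  assumes \<zeta>: "\<zeta> ^ 2 = -1" and k: "k < 4" and c: "c * \<zeta> ^ (2 * k) = \<zeta>"
  shows "\<zeta> ^ k * (1 + c) = (-1) ^ (k choose 2) * (1 + \<zeta>)"
proof -
  have "c = c * ((-1) ^ k * (-1) ^ k)"
    by simp
  also have "\<dots> = (c * \<zeta> ^ (2 * k)) * (-1) ^ k"
    by (simp add: power_mult \<zeta> mult.assoc)
  finally have c_eq: "c = \<zeta> * (-1) ^ k"
    using c by simp
  have "\<zeta> ^ 3 = - \<zeta>"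
    using \<zeta> by (simp add: power3_eq_cube power2_eq_square)
  moreover have "k = 0 \<or> k = 1 \<or> k = 2 \<or> k = 3"
    using k by auto
  ultimately show ?thesis
    using \<zeta> unfolding c_eq by (auto simp: algebra_simps power2_eq_square numeral_2_eq_2 numeral_3_eq_3)
qed

lemma neg_one_power_mult_eq_self_iff:
  fixes w :: "'a::idom"
  assumes "(2::'a) \<noteq> 0" and "w \<noteq> 0"
  shows "(-1) ^ n * w = w \<longleftrightarrow> even n"
  using assms by (cases "even n") (auto simp: eq_neg_iff_add_eq_0 simp flip: mult_2)

lemma one_plus_root_neq_zero:
  fixes \<zeta> :: "'a::comm_ring_1"
  assumes "\<zeta> ^ 2 = -1" and "(2::'a) \<noteq> 0"
  shows "1 + \<zeta> \<noteq> 0"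
proof
  assume "1 + \<zeta> = 0"
  then have "\<zeta> = -1"
    by (simp add: add_eq_0_iff)
  with assms show False
    by simp
qed

lemma subfield_mem_if_power2_eq:
  assumes "is_subfield K" and "s \<in> K" and "y ^ 2 = s ^ 2"
  shows "y \<in> K"
  using assms unfolding is_subfield_def power2_eq_iff by auto

lemma abs_galois_fixed:
  "g \<in> abs_galois K \<Longrightarrow> a \<in> K \<Longrightarrow> g a = a"
  by (simp add: abs_galois_def)

lemma abs_galois_add:
  "g \<in> abs_galois K \<Longrightarrow> g (a + b) = g a + g b"
  by (simp add: abs_galois_def)

lemma abs_galois_mult:
  "g \<in> abs_galois K \<Longrightarrow> g (a * b) = g a * g b"
  by (simp add: abs_galois_def)

lemma abs_galois_minus:
  fixes g :: "'a::field \<Rightarrow> 'a"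
  assumes "g \<in> abs_galois K"
  shows "g (- a) = - g a"
proof -
  have "g 0 = 0"
    using abs_galois_add[OF assms, of 0 0] by (metis add.right_neutral add_cancel_right_right)
  then show ?thesis
    using abs_galois_add[OF assms, of a "- a"] by (simp add: eq_neg_iff_add_eq_0 add.commute)
qed

lemma abs_galois_power:
  assumes "g \<in> abs_galois K" and "is_subfield K"
  shows "g (a ^ n) = g a ^ n"
proof (induction n)
  case 0
  show ?case
    using assms by (simp add: abs_galois_fixed is_subfield_def)
next
  case (Suc n)
  then show ?case
    using abs_galois_mult[OF assms(1)] by simp
qed

lemma kummer4_eqI:
  fixes \<zeta> r :: "'a::field"
  assumes \<zeta>: "\<zeta> ^ 2 = -1" and two: "(2::'a) \<noteq> 0" and r: "r \<noteq> 0"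
    and k: "k < 4" and gr: "g r = \<zeta> ^ k * r"
  shows "kummer4 \<zeta> r g = k"
  unfolding kummer4_def
proof (rule the_equality)
  show "k < 4 \<and> g r = \<zeta> ^ k * r"
    using k gr by simp
  fix j
  assume "j < 4 \<and> g r = \<zeta> ^ j * r"
  with gr r show "j = k"
    using power_less_four_inj[OF \<zeta> two _ k] by auto
qed

lemma kummer4_conj:
  fixes \<zeta> r :: "'a::field"
  assumes \<zeta>: "\<zeta> ^ 2 = -1" and two: "(2::'a) \<noteq> 0" and r: "r \<noteq> 0"
    and gr: "g r ^ 4 = r ^ 4"
  shows "kummer4 \<zeta> r g < 4" and "g r = \<zeta> ^ kummer4 \<zeta> r g * r"
proof -
  have "(g r / r) ^ 4 = 1"
    using gr r by (simp add: power_divide)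
  then obtain k where k: "k < 4" and "g r / r = \<zeta> ^ k"
    using fourth_root_of_unity_eq_power[OF \<zeta>] by blast
  then have "g r = \<zeta> ^ k * r"
    using r by (simp add: divide_eq_eq)
  with k show "kummer4 \<zeta> r g < 4" and "g r = \<zeta> ^ kummer4 \<zeta> r g * r"
    using kummer4_eqI[OF \<zeta> two r k] by simp_all
qed

lemma kummer2_power2:
  assumes "\<And>a. g (- a) = - g a"
  shows "kummer2 (w ^ 2) g = (if g w = w then 0 else 1)"
proof -
  define v where "v = (SOME v. v ^ 2 = w ^ 2)"
  have "v ^ 2 = w ^ 2"
    unfolding v_def by (rule someI[of _ w]) simp
  then have "v = w \<or> v = - w"
    by (simp add: power2_eq_iff)
  then have "g v = v \<longleftrightarrow> g w = w"
    using assms by auto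
  then show ?thesis
    unfolding kummer2_def v_def[symmetric] by (simp add: Let_def)
qed

lemma kummer2_power2_eq_mod_2:
  fixes w :: "'a::field"
  assumes "(2::'a) \<noteq> 0" and "w \<noteq> 0"
    and "\<And>a. g (- a) = - g a" and "g w = (-1) ^ n * w"
  shows "kummer2 (w ^ 2) g = n mod 2"
  using assms kummer2_power2[of g w] neg_one_power_mult_eq_self_iff[of w n]
  by (simp add: odd_iff_mod_2_eq_one)

lemma abs_galois_root_mult_one_plus:
  fixes \<zeta> r :: "'a::field"
  assumes K: "is_subfield K" and g: "g \<in> abs_galois K"
    and \<zeta>: "\<zeta> ^ 2 = -1" and two: "(2::'a) \<noteq> 0" and r: "r \<noteq> 0"
    and "r ^ 4 \<in> K" and "\<zeta> * r ^ 2 \<in> K"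
  shows "g (r * (1 + \<zeta>)) = (-1) ^ (kummer4 \<zeta> r g choose 2) * (r * (1 + \<zeta>))"
proof -
  define k where "k = kummer4 \<zeta> r g"
  have "g r ^ 4 = r ^ 4"
    using assms(6) g by (metis abs_galois_fixed abs_galois_power[OF g K])
  then have k: "k < 4" and gr: "g r = \<zeta> ^ k * r"
    unfolding k_def using kummer4_conj[OF \<zeta> two r] by simp_all
  have "g \<zeta> * g r ^ 2 = \<zeta> * r ^ 2"
    using assms(7) g by (simp add: abs_galois_fixed flip: abs_galois_power[OF g K] abs_galois_mult[OF g])
  then have g\<zeta>: "g \<zeta> * \<zeta> ^ (2 * k) = \<zeta>"
    using r unfolding gr by (simp add: power_mult_distrib mult.assoc mult.commute[of 2 k] flip: power_mult)
  have "g (r * (1 + \<zeta>)) = g r * (1 + g \<zeta>)"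
    using g K by (simp add: abs_galois_mult abs_galois_add abs_galois_fixed is_subfield_def)
  also have "\<dots> = r * (\<zeta> ^ k * (1 + g \<zeta>))"
    by (simp add: gr)
  also have "\<dots> = (-1) ^ (k choose 2) * (r * (1 + \<zeta>))"
    by (simp add: power_mult_one_plus_conj_eq[OF \<zeta> k g\<zeta>])
  finally show ?thesis
    unfolding k_def .
qed

theorem lemma12p5:
  fixes K :: "'a::field set" and zeta x r :: 'a
  assumes "is_subfield K"
    and "is_algebraic_closure_of K"
    and "(2::'a) \<noteq> 0"
    and "zeta ^ 4 = 1" and "zeta ^ 2 \<noteq> 1"
    and "x \<in> K" and "x \<noteq> 0"
    and "\<exists>s\<in>K. s \<noteq> 0 \<and> s ^ 2 = - x"
    and "r ^ 4 = x"
  shows "\<forall>g\<in>abs_galois K. (kummer4 zeta r g choose 2) mod 2 = kummer2 (2 * (zeta * r ^ 2)) g"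
proof
  fix g
  assume g: "g \<in> abs_galois K"
  have \<zeta>: "zeta ^ 2 = -1"
    using assms(4,5) by (rule primitive_fourth_root_square)
  have r: "r \<noteq> 0"
    using assms(7,9) by auto
  obtain s where "s \<in> K" and "s ^ 2 = - x"
    using assms(8) by blast
  moreover have "(zeta * r ^ 2) ^ 2 = - x"
    using \<zeta> assms(9) by (simp add: power_mult_distrib flip: power_mult)
  ultimately have "zeta * r ^ 2 \<in> K"
    using assms(1) subfield_mem_if_power2_eq by metis
  then have "g (r * (1 + zeta)) = (-1) ^ (kummer4 zeta r g choose 2) * (r * (1 + zeta))"
    using abs_galois_root_mult_one_plus[OF assms(1) g \<zeta> assms(3) r] assms(6,9) by simp
  moreover have "r * (1 + zeta) \<noteq> 0"
    using r one_plus_root_neq_zero[OF \<zeta> assms(3)] by simp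
  moreover have "2 * (zeta * r ^ 2) = (r * (1 + zeta)) ^ 2"
    using \<zeta> by (simp add: power2_eq_square algebra_simps)
  ultimately show "(kummer4 zeta r g choose 2) mod 2 = kummer2 (2 * (zeta * r ^ 2)) g"
    using kummer2_power2_eq_mod_2[OF assms(3)] abs_galois_minus[OF g] by metis
qed

end
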